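(* The sets $R_s$, $R_b$, $R_t$ are non-empty. Moreover: (i) $R_s$ contains a neighborhood (relative to $[0,1]^2$) of $\boldsymbol h=(h_1,h_2)$; (ii) $R_b\cap([h_1,1]\times[h_2,1])=\emptyset$; for every $m_1\in[0,1]$ there is $\delta>0$ with $(m_1,\epsilon)\in R_b$ for all $\epsilon\in[0,\delta)$; and for every $m_2\in[0,1]$ there is $\delta>0$ with $(\epsilon,m_2)\in R_b$ for all $\epsilon\in[0,\delta)$; (iii) $R_t\cap([0,h_1)\times[0,h_2))=\emptyset$, and there is $\delta>0$ such that $(1-\epsilon,1-\epsilon)\in R_t$ for all $\epsilon\in[0,\delta)$.
   Context: Fix a cumulative distribution function $F$ on $[0,1]^2$ with a density $f$ that has full support on $[0,1]^2$, a constant $c\in(0,1)$ and $\boldsymbol h=(h_1,h_2)\in(0,1)^2$. For $\boldsymbol x,\boldsymbol y\in[0,1]^2$ write $\boldsymbol x\vee\boldsymbol y=(\max\{x_1,y_1\},\max\{x_2,y_2\})$, and for $F(\boldsymbol x)<1$ let $n(\boldsymbol x)=\frac{1}{c(1-F(\boldsymbol x))}$. For $\boldsymbol m\in[0,1]^2$ define $\bar w_s=F(\boldsymbol h)$, $\bar w_b=n(\boldsymbol m)\big(F(\boldsymbol m\vee\boldsymbol h)-F(\boldsymbol m)\big)$ (with $\bar w_b:=0$ if $F(\boldsymbol m)=1$), $\bar w_t=F(\boldsymbol m\vee\boldsymbol h)-F(\boldsymbol m)/n(\boldsymbol h)$, and the regions $R_s=\{\boldsymbol m\in[0,1]^2:\bar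 w_s\ge\max\{\bar w_b,\bar w_t\}\}$, $R_b=\{\boldsymbol m:\bar w_b>\max\{\bar w_s,\bar w_t\}\}$, $R_t=[0,1]^2\setminus(R_s\cup R_b)$. (Interpretation: these are the maximal wages that single-layer, bottom-automated and top-automated firms can pay when machines rent at $F(\boldsymbol m)$.) *)

theory Defs
  imports "HOL-Analysis.Analysis"
begin

definition unit_sq :: "(real \<times> real) set" where
  "unit_sq = cbox (0,0) (1,1)"

definition pjoin :: "real \<times> real \<Rightarrow> real \<times> real \<Rightarrow> real \<times> real" where
  "pjoin x y = (max (fst x) (fst y), max (snd x) (snd y))"

definition is_density_cdf ::
  "(real \<times> real \<Rightarrow> real) \<Rightarrow> (real \<times> real \<Rightarrow> real) \<Rightarrow> bool" where
  "is_density_cdf F f \<longleftrightarrow>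
     f integrable_on unit_sq \<and>
     (\<forall>x\<in>unit_sq. 0 \<le> f x) \<and>
     integral unit_sq f = 1 \<and>
     (\<forall>x\<in>unit_sq. F x = integral (cbox (0,0) x) f)"

definition full_support :: "(real \<times> real \<Rightarrow> real) \<Rightarrow> bool" where
  "full_support f \<longleftrightarrow>
     (\<forall>a\<in>unit_sq. \<forall>b\<in>unit_sq. fst a < fst b \<and> snd a < snd b \<longrightarrow>
        integral (cbox a b) f > 0)"

definition nfun :: "(real \<times> real \<Rightarrow> real) \<Rightarrow> real \<Rightarrow> real \<times> real \<Rightarrow> real" where
  "nfun F c x = 1 / (c * (1 - F x))"

definition w_s :: "(real \<times> real \<Rightarrow> real) \<Rightarrow> real \<times> real \<Rightarrow> real" where
  "w_s F h = F h"

definition w_b :: "(real \<times> real \<Rightarrow> real) \<Rightarrow> real \<Rightarrow> real \<times> real \<Rightarrow> real \<times> real \<Rightarrow> real" where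
  "w_b F c h m = (if F m = 1 then 0 else nfun F c m * (F (pjoin m h) - F m))"

definition w_t :: "(real \<times> real \<Rightarrow> real) \<Rightarrow> real \<Rightarrow> real \<times> real \<Rightarrow> real \<times> real \<Rightarrow> real" where
  "w_t F c h m = F (pjoin m h) - F m / nfun F c h"

definition R_s :: "(real \<times> real \<Rightarrow> real) \<Rightarrow> real \<Rightarrow> real \<times> real \<Rightarrow> (real \<times> real) set" where
  "R_s F c h = {m\<in>unit_sq. w_s F h \<ge> max (w_b F c h m) (w_t F c h m)}"

definition R_b :: "(real \<times> real \<Rightarrow> real) \<Rightarrow> real \<Rightarrow> real \<times> real \<Rightarrow> (real \<times> real) set" where
  "R_b F c h = {m\<in>unit_sq. w_b F c h m > max (w_s F h) (w_t F c h m)}"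

definition R_t :: "(real \<times> real \<Rightarrow> real) \<Rightarrow> real \<Rightarrow> real \<times> real \<Rightarrow> (real \<times> real) set" where
  "R_t F c h = unit_sq - (R_s F c h \<union> R_b F c h)"

end

theory Submission
  imports Defs
begin

text \<open>All three maximal wages are continuous functions of the machine position wherever
  F m < 1, so each claim reduces to a strict comparison of wages at a single point,
  which then persists nearby. At h the bottom and top wages fall strictly below the
  single-layer wage F h; on the axes F vanishes and the bottom wage F (pjoin m h) / c beats
  both competitors; near (1,1) the bottom wage is identically 0 while the top wage tends
  to 1 - c(1 - F h) > F h. The two emptiness claims are pointwise: above h the bottom wage
  is 0, and below h the top wage is at most F h.\<close>

lemma unit_sq_eq: "unit_sq = {0..1} \<times> {0..1}"
  unfolding unit_sq_def by (simp add: cbox_Pair_eq)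

lemma cbox_origin_eq: "cbox (0,0) (x::real\<times>real) = {0..fst x} \<times> {0..snd x}"
  by (cases x) (simp add: cbox_Pair_eq)

lemma pjoin_in_unit_sq: "x \<in> unit_sq \<Longrightarrow> y \<in> unit_sq \<Longrightarrow> pjoin x y \<in> unit_sq"
  unfolding unit_sq_eq pjoin_def by (auto simp: mem_Times_iff)

lemma fst_pjoin [simp]: "fst (pjoin x y) = max (fst x) (fst y)"
  and snd_pjoin [simp]: "snd (pjoin x y) = max (snd x) (snd y)"
  unfolding pjoin_def by simp_all

lemma pjoin_eq_left: "fst y \<le> fst x \<Longrightarrow> snd y \<le> snd x \<Longrightarrow> pjoin x y = x"
  unfolding pjoin_def by (simp add: max_absorb1)

lemma pjoin_eq_right: "fst x \<le> fst y \<Longrightarrow> snd x \<le> snd y \<Longrightarrow> pjoin x y = y"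
  unfolding pjoin_def by (simp add: max_absorb2)

lemma continuous_within_less_locally:
  fixes g k :: "'a::metric_space \<Rightarrow> real"
  assumes "continuous (at p within S) g" "continuous (at p within S) k" "g p < k p"
  shows "\<exists>d>0. \<forall>y\<in>S. dist y p < d \<longrightarrow> g y < k y"
proof -
  have "((\<lambda>y. k y - g y) \<longlongrightarrow> k p - g p) (at p within S)"
    using assms(1,2) unfolding continuous_within by (rule tendsto_diff[rotated])
  then have "eventually (\<lambda>y. 0 < k y - g y) (at p within S)"
    using assms(3) by (intro order_tendstoD(1)) auto
  then obtain d where "d > 0" "\<forall>y\<in>S. y \<noteq> p \<and> dist y p < d \<longrightarrow> 0 < k y - g y"
    unfolding eventually_at by blast
  then show ?thesis using assms(3) by (metis diff_gt_0_iff_gt)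
qed

context
  fixes F f :: "real \<times> real \<Rightarrow> real"
  assumes cdf: "is_density_cdf F f"
begin

lemma density_integrable_on_cbox: "x \<in> unit_sq \<Longrightarrow> f integrable_on cbox (0,0) x"
  using cdf unfolding is_density_cdf_def
  by (elim conjE integrable_on_subcbox) (auto simp: unit_sq_eq cbox_origin_eq)

lemma cdf_nonneg: "x \<in> unit_sq \<Longrightarrow> 0 \<le> F x"
  using cdf density_integrable_on_cbox[of x]
  unfolding is_density_cdf_def by (auto simp: unit_sq_eq cbox_origin_eq intro!: integral_nonneg)

lemma cdf_mono:
  assumes "x \<in> unit_sq" "y \<in> unit_sq" "fst x \<le> fst y" "snd x \<le> snd y"
  shows "F x \<le> F y"
proof -
  have "cbox (0,0) x \<subseteq> cbox (0,0) y" using assms by (auto simp: cbox_origin_eq)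
  moreover have "\<forall>z\<in>cbox (0,0) y. 0 \<le> f z"
    using cdf assms(2) unfolding is_density_cdf_def by (auto simp: unit_sq_eq cbox_origin_eq)
  ultimately show ?thesis
    using cdf assms density_integrable_on_cbox
    unfolding is_density_cdf_def by (simp add: integral_subset_le)
qed

lemma cdf_top: "F (1,1) = 1"
  using cdf unfolding is_density_cdf_def unit_sq_def by auto

lemma cdf_le_one: "x \<in> unit_sq \<Longrightarrow> F x \<le> 1"
  using cdf_mono[of x "(1,1)"] cdf_top by (auto simp: unit_sq_eq mem_Times_iff)

lemma cdf_on_axis_fst: "a \<in> {0..1} \<Longrightarrow> F (a,0) = 0"
  using cdf unfolding is_density_cdf_def unit_sq_def by (auto simp: content_Pair)

lemma cdf_on_axis_snd: "a \<in> {0..1} \<Longrightarrow> F (0,a) = 0"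
  using cdf unfolding is_density_cdf_def unit_sq_def by (auto simp: content_Pair)

lemma continuous_on_cdf: "continuous_on unit_sq F"
  unfolding continuous_on_iff
proof (intro ballI allI impI)
  fix x and e :: real assume x: "x \<in> unit_sq" and e: "0 < e"
  have "f integrable_on cbox (0,0) (1,1)"
    using cdf unfolding is_density_cdf_def unit_sq_def by auto
  moreover have "(0,0) \<in> cbox (0::real,0::real) (1,1)" by auto
  ultimately obtain d where "0 < d" and d: "\<forall>a\<in>unit_sq. \<forall>b\<in>unit_sq.
      norm (a - (0,0)) \<le> d \<and> norm (b - x) \<le> d \<longrightarrow>
      norm (integral (cbox a b) f - integral (cbox (0,0) x) f) < e"
    using indefinite_integral_continuous[OF _ _ x[unfolded unit_sq_def] e] unfolding unit_sq_def
    by metis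
  have "dist (F y) (F x) < e" if "y \<in> unit_sq" "dist y x < d" for y
    using d[rule_format, of "(0,0)" y] cdf that x \<open>0 < d\<close>
    unfolding is_density_cdf_def by (auto simp: dist_norm unit_sq_eq)
  with \<open>0 < d\<close> show "\<exists>d>0. \<forall>y\<in>unit_sq. dist y x < d \<longrightarrow> dist (F y) (F x) < e" by blast
qed

context
  assumes support: "full_support f"
begin

lemma cdf_pos: "x \<in> unit_sq \<Longrightarrow> 0 < fst x \<Longrightarrow> 0 < snd x \<Longrightarrow> 0 < F x"
  using support cdf unfolding full_support_def is_density_cdf_def
  by (auto simp: unit_sq_eq)

text \<open>The strip to the right of x carries positive mass.\<close>
lemma cdf_less_one:
  assumes x: "x \<in> unit_sq" "fst x < 1"
  shows "F x < 1"
proof -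
  let ?a = "fst x"
  have "f integrable_on cbox (0,0) (1,1)"
    using cdf unfolding is_density_cdf_def unit_sq_def by auto
  from integral_split[OF this, of "(1,0)" ?a]
  have "integral (cbox (0,0) (1,1)) f =
      integral (cbox (0,0) (1,1) \<inter> {y. y \<bullet> (1,0) \<le> ?a}) f +
      integral (cbox (0,0) (1,1) \<inter> {y. ?a \<le> y \<bullet> (1,0)}) f"
    by (simp add: Basis_prod_def)
  also have "cbox (0,0) (1,1) \<inter> {y. y \<bullet> (1,0) \<le> ?a} = cbox (0,0) (?a,1)"
    using x by (auto simp: unit_sq_eq cbox_Pair_eq inner_prod_def mem_Times_iff)
  also have "cbox (0,0) (1,1) \<inter> {y. ?a \<le> y \<bullet> (1,0)} = cbox (?a,0) (1,1)"
    using x by (auto simp: unit_sq_eq cbox_Pair_eq inner_prod_def mem_Times_iff)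
  finally have "integral (cbox (0,0) (1,1)) f =
      integral (cbox (0,0) (?a,1)) f + integral (cbox (?a,0) (1,1)) f" .
  moreover have "(?a,1) \<in> unit_sq" using x by (auto simp: unit_sq_eq mem_Times_iff)
  then have "integral (cbox (0,0) (1,1)) f = 1" "F (?a,1) = integral (cbox (0,0) (?a,1)) f"
    using cdf unfolding is_density_cdf_def unit_sq_def by auto
  moreover have "0 < integral (cbox (?a,0) (1,1)) f"
    using support x unfolding full_support_def by (auto simp: unit_sq_eq)
  moreover have "F x \<le> F (?a,1)"
    using x by (intro cdf_mono) (auto simp: unit_sq_eq mem_Times_iff)
  ultimately show ?thesis by linarith
qed

end

end

context
  fixes F f :: "real \<times> real \<Rightarrow> real" and c :: real and h :: "real \<times> real"
  assumes cdf: "is_density_cdf F f"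
    and c: "0 < c" "c < 1"
    and h: "h \<in> unit_sq"
    and Fh: "0 < F h" "F h < 1"
begin

lemma w_t_eq: "w_t F c h m = F (pjoin m h) - c * (1 - F h) * F m"
  unfolding w_t_def nfun_def by simp

text \<open>When F m = 1 the defining case split is subsumed by division by zero, because then
  F (pjoin m h) = 1 as well.\<close>
lemma w_b_eq:
  assumes "m \<in> unit_sq"
  shows "w_b F c h m = (F (pjoin m h) - F m) / (c * (1 - F m))"
proof -
  have "F m \<le> F (pjoin m h)" "F (pjoin m h) \<le> 1"
    using assms h cdf_mono[OF cdf] cdf_le_one[OF cdf] pjoin_in_unit_sq by auto
  then show ?thesis unfolding w_b_def nfun_def by auto
qed

lemma continuous_on_cdf_pjoin: "continuous_on unit_sq (\<lambda>m. F (pjoin m h))"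
proof (rule continuous_on_compose2[OF continuous_on_cdf[OF cdf]])
  show "continuous_on unit_sq (\<lambda>m. pjoin m h)"
    unfolding pjoin_def by (intro continuous_intros)
qed (use h pjoin_in_unit_sq in blast)

lemma continuous_on_w_t: "continuous_on unit_sq (w_t F c h)"
  unfolding w_t_eq by (intro continuous_intros continuous_on_cdf_pjoin continuous_on_cdf[OF cdf])

lemma continuous_w_b:
  assumes "p \<in> unit_sq" "F p < 1"
  shows "continuous (at p within unit_sq) (w_b F c h)"
proof (rule continuous_transform_within[OF _ zero_less_one assms(1)])
  have "continuous (at p within unit_sq) F" "continuous (at p within unit_sq) (\<lambda>m. F (pjoin m h))"
    using assms(1) continuous_on_cdf[OF cdf] continuous_on_cdf_pjoin
    by (auto simp: continuous_on_eq_continuous_within)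
  then show "continuous (at p within unit_sq) (\<lambda>m. (F (pjoin m h) - F m) / (c * (1 - F m)))"
    using assms(2) c by (intro continuous_intros) auto
qed (simp add: w_b_eq)

lemma continuous_w_t: "p \<in> unit_sq \<Longrightarrow> continuous (at p within unit_sq) (w_t F c h)"
  using continuous_on_w_t by (simp add: continuous_on_eq_continuous_within)

lemma mem_R_t_iff:
  "m \<in> R_t F c h \<longleftrightarrow> m \<in> unit_sq \<and> w_s F h < w_t F c h m \<and> w_b F c h m \<le> w_t F c h m"
  unfolding R_t_def R_s_def R_b_def by auto

lemma R_s_near_h: "\<exists>e>0. ball h e \<inter> unit_sq \<subseteq> R_s F c h"
proof -
  have "w_b F c h h = 0" "w_t F c h h = F h - c * (1 - F h) * F h"
    using h by (simp_all add: w_b_eq w_t_eq pjoin_eq_left)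
  moreover have "0 < c * (1 - F h) * F h" using c Fh by simp
  ultimately have "w_b F c h h < F h" "w_t F c h h < F h" using Fh by simp_all
  then obtain d1 d2 where "d1 > 0" "\<forall>y\<in>unit_sq. dist y h < d1 \<longrightarrow> w_b F c h y < F h"
      and "d2 > 0" "\<forall>y\<in>unit_sq. dist y h < d2 \<longrightarrow> w_t F c h y < F h"
    using continuous_within_less_locally[of h unit_sq _ "\<lambda>_. F h"] h Fh
      continuous_w_b continuous_w_t by (metis continuous_const)
  then show ?thesis
    by (intro exI[of _ "min d1 d2"]) (auto simp: R_s_def w_s_def dist_commute less_imp_le)
qed

lemma R_b_near_null:
  assumes p: "p \<in> unit_sq" "F p = 0"
  shows "\<exists>d>0. \<forall>y\<in>unit_sq. dist y p < d \<longrightarrow> y \<in> R_b F c h"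
proof -
  let ?G = "F (pjoin p h)"
  have "F h \<le> ?G"
    using p h by (intro cdf_mono[OF cdf]) (auto simp: pjoin_in_unit_sq)
  then have "?G < ?G / c" using Fh c by (simp add: less_divide_eq)
  moreover have "w_b F c h p = ?G / c" "w_t F c h p = ?G"
    using p by (simp_all add: w_b_eq w_t_eq)
  ultimately have "F h < w_b F c h p" "w_t F c h p < w_b F c h p"
    using \<open>F h \<le> ?G\<close> by simp_all
  then obtain d1 d2 where "d1 > 0" "\<forall>y\<in>unit_sq. dist y p < d1 \<longrightarrow> F h < w_b F c h y"
      and "d2 > 0" "\<forall>y\<in>unit_sq. dist y p < d2 \<longrightarrow> w_t F c h y < w_b F c h y"
    using continuous_within_less_locally[of p unit_sq] p continuous_w_b continuous_w_t
    by (metis continuous_const zero_less_one)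
  then show ?thesis
    by (intro exI[of _ "min d1 d2"]) (auto simp: R_b_def w_s_def)
qed

lemma w_b_above_h:
  assumes "m \<in> unit_sq" "fst h \<le> fst m" "snd h \<le> snd m"
  shows "w_b F c h m = 0"
  using assms by (simp add: w_b_eq pjoin_eq_left)

lemma R_b_disjoint_above_h: "R_b F c h \<inter> ({fst h..1} \<times> {snd h..1}) = {}"
  using w_b_above_h Fh by (force simp: R_b_def w_s_def)

lemma R_t_disjoint_below_h: "R_t F c h \<inter> ({0..<fst h} \<times> {0..<snd h}) = {}"
proof -
  have "m \<notin> R_t F c h" if "m \<in> {0..<fst h} \<times> {0..<snd h}" for m
  proof (cases "m \<in> unit_sq")
    case True
    have "pjoin m h = h" using that by (intro pjoin_eq_right) auto
    moreover have "0 \<le> c * (1 - F h) * F m" using c Fh cdf_nonneg[OF cdf True] by simp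
    ultimately show ?thesis by (simp add: mem_R_t_iff w_t_eq w_s_def)
  qed (simp add: mem_R_t_iff)
  then show ?thesis by blast
qed

lemma R_t_near_top: "\<exists>d>0. \<forall>y\<in>unit_sq. dist y (1,1) < d \<longrightarrow> fst h \<le> fst y \<longrightarrow> snd h \<le> snd y
    \<longrightarrow> y \<in> R_t F c h"
proof -
  have top: "(1,1) \<in> unit_sq" by (simp add: unit_sq_eq)
  have "c * (1 - F h) < 1 - F h" using c Fh by simp
  moreover have "pjoin (1,1) h = (1,1)" using h by (intro pjoin_eq_left) (auto simp: unit_sq_eq)
  ultimately have "F h < w_t F c h (1,1)"
    using cdf_top[OF cdf] by (simp add: w_t_eq)
  then obtain d where "d > 0" "\<forall>y\<in>unit_sq. dist y (1,1) < d \<longrightarrow> F h < w_t F c h y"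
    using continuous_within_less_locally[of "(1,1)" unit_sq "\<lambda>_. F h"] continuous_w_t[OF top]
    by (metis continuous_const)
  then show ?thesis
    using w_b_above_h Fh by (intro exI[of _ d]) (auto simp: mem_R_t_iff w_s_def)
qed

lemma R_b_near_axis_fst: "m1 \<in> {0..1} \<Longrightarrow> \<exists>\<delta>>0. \<forall>\<epsilon>. 0 \<le> \<epsilon> \<and> \<epsilon> < \<delta> \<longrightarrow> (m1, \<epsilon>) \<in> R_b F c h"
proof -
  assume m1: "m1 \<in> {0..1}"
  obtain d where "d > 0" "\<forall>y\<in>unit_sq. dist y (m1,0) < d \<longrightarrow> y \<in> R_b F c h"
    using R_b_near_null[of "(m1,0)"] cdf_on_axis_fst[OF cdf m1] m1 by (auto simp: unit_sq_eq)
  then show ?thesis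
    using m1 by (intro exI[of _ "min d 1"]) (auto simp: unit_sq_eq dist_Pair_Pair)
qed

lemma R_b_near_axis_snd: "m2 \<in> {0..1} \<Longrightarrow> \<exists>\<delta>>0. \<forall>\<epsilon>. 0 \<le> \<epsilon> \<and> \<epsilon> < \<delta> \<longrightarrow> (\<epsilon>, m2) \<in> R_b F c h"
proof -
  assume m2: "m2 \<in> {0..1}"
  obtain d where "d > 0" "\<forall>y\<in>unit_sq. dist y (0,m2) < d \<longrightarrow> y \<in> R_b F c h"
    using R_b_near_null[of "(0,m2)"] cdf_on_axis_snd[OF cdf m2] m2 by (auto simp: unit_sq_eq)
  then show ?thesis
    using m2 by (intro exI[of _ "min d 1"]) (auto simp: unit_sq_eq dist_Pair_Pair)
qed

lemma R_t_near_top_diagonal: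
  assumes "fst h < 1" "snd h < 1"
  shows "\<exists>\<delta>>0. \<forall>\<epsilon>. 0 \<le> \<epsilon> \<and> \<epsilon> < \<delta> \<longrightarrow> (1 - \<epsilon>, 1 - \<epsilon>) \<in> R_t F c h"
proof -
  obtain d where d: "d > 0" "\<forall>y\<in>unit_sq. dist y (1,1) < d \<longrightarrow> fst h \<le> fst y \<longrightarrow> snd h \<le> snd y
      \<longrightarrow> y \<in> R_t F c h"
    using R_t_near_top by blast
  have "(1 - \<epsilon>, 1 - \<epsilon>) \<in> R_t F c h"
    if "0 \<le> \<epsilon>" "\<epsilon> < min (d/2) (min (1 - fst h) (1 - snd h))" for \<epsilon>
  proof -
    have "dist (1 - \<epsilon>, 1 - \<epsilon>) (1,1) \<le> \<epsilon> + \<epsilon>"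
      using norm_Pair_le[of "-\<epsilon>" "-\<epsilon>"] that(1) by (simp add: dist_norm)
    then show ?thesis
      using d(2)[rule_format, of "(1 - \<epsilon>, 1 - \<epsilon>)"] that h by (auto simp: unit_sq_eq)
  qed
  moreover have "0 < min (d/2) (min (1 - fst h) (1 - snd h))" using d(1) assms by simp
  ultimately show ?thesis by blast
qed

end

theorem proposition2:
  fixes F f :: "real \<times> real \<Rightarrow> real" and c :: real and h :: "real \<times> real"
  assumes "is_density_cdf F f"
    and "full_support f"
    and "0 < c" and "c < 1"
    and "0 < fst h" and "fst h < 1" and "0 < snd h" and "snd h < 1"
  shows "R_s F c h \<noteq> {} \<and> R_b F c h \<noteq> {} \<and> R_t F c h \<noteq> {}
    \<and> (\<exists>e>0. ball h e \<inter> unit_sq \<subseteq> R_s F c h)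
    \<and> R_b F c h \<inter> ({fst h..1} \<times> {snd h..1}) = {}
    \<and> (\<forall>m1\<in>{0..1}. \<exists>\<delta>>0. \<forall>\<epsilon>. 0 \<le> \<epsilon> \<and> \<epsilon> < \<delta> \<longrightarrow> (m1, \<epsilon>) \<in> R_b F c h)
    \<and> (\<forall>m2\<in>{0..1}. \<exists>\<delta>>0. \<forall>\<epsilon>. 0 \<le> \<epsilon> \<and> \<epsilon> < \<delta> \<longrightarrow> (\<epsilon>, m2) \<in> R_b F c h)
    \<and> R_t F c h \<inter> ({0..<fst h} \<times> {0..<snd h}) = {}
    \<and> (\<exists>\<delta>>0. \<forall>\<epsilon>. 0 \<le> \<epsilon> \<and> \<epsilon> < \<delta> \<longrightarrow> (1 - \<epsilon>, 1 - \<epsilon>) \<in> R_t F c h)"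
proof -
  have h: "h \<in> unit_sq" using assms(5-8) by (auto simp: unit_sq_eq mem_Times_iff)
  have Fh: "0 < F h" "F h < 1"
    using cdf_pos[OF assms(1,2) h] cdf_less_one[OF assms(1,2) h] assms(5-8) by auto
  note wages = assms(1,3,4) h Fh
  have i: "\<exists>e>0. ball h e \<inter> unit_sq \<subseteq> R_s F c h"
    by (rule R_s_near_h[OF wages])
  have ii: "\<forall>m1\<in>{0..1}. \<exists>\<delta>>0. \<forall>\<epsilon>. 0 \<le> \<epsilon> \<and> \<epsilon> < \<delta> \<longrightarrow> (m1, \<epsilon>) \<in> R_b F c h"
    using R_b_near_axis_fst[OF wages] by blast
  have iii: "\<exists>\<delta>>0. \<forall>\<epsilon>. 0 \<le> \<epsilon> \<and> \<epsilon> < \<delta> \<longrightarrow> (1 - \<epsilon>, 1 - \<epsilon>) \<in> R_t F c h"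
    using R_t_near_top_diagonal[OF wages] assms(6,8) by blast
  have "h \<in> R_s F c h" "(0,0) \<in> R_b F c h" "(1,1) \<in> R_t F c h"
    using i ii iii h by force+
  then show ?thesis
    using i ii iii R_b_near_axis_snd[OF wages] R_b_disjoint_above_h[OF wages]
      R_t_disjoint_below_h[OF wages] by blast
qed

end
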